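(* Let $(X,\mathcal{B},\mu)$ be a probability space and $T_1,\dots,T_k$ measurable transformations of $(X,\mathcal{B})$ with $T_i$-invariant probability measures $\mu_i$ equivalent to $\mu$. Let $\nu$ be a probability measure on $(X,\mathcal{B})$ equivalent to $\mu$. If $T_1,\dots,T_k$ are jointly mixing with respect to $(\mu;\mu_1,\dots,\mu_k)$, then they are jointly mixing with respect to $(\nu;\mu_1,\dots,\mu_k)$.
   Context: $T_1,\dots,T_k$ are jointly mixing with respect to $(\mu;\mu_1,\dots,\mu_k)$ if for all $A_0,\dots,A_k\in\mathcal{B}$, $\lim_{n\to\infty}\mu(A_0\cap T_1^{-n}A_1\cap\cdots\cap T_k^{-n}A_k)=\mu(A_0)\prod_{i=1}^k\mu_i(A_i)$. *)

theory Defs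
  imports "HOL-Probability.Probability"
begin

definition equivalent_measures :: "'a measure \<Rightarrow> 'a measure \<Rightarrow> bool" where
  "equivalent_measures M N \<longleftrightarrow> sets M = sets N \<and>
     (\<forall>A\<in>sets M. emeasure M A = 0 \<longleftrightarrow> emeasure N A = 0)"

definition jointly_mixing ::
  "'a measure \<Rightarrow> (nat \<Rightarrow> 'a \<Rightarrow> 'a) \<Rightarrow> (nat \<Rightarrow> 'a measure) \<Rightarrow> nat \<Rightarrow> bool" where
  "jointly_mixing mu T mus k \<longleftrightarrow>
     (\<forall>A :: nat \<Rightarrow> 'a set. (\<forall>i\<in>{0..k}. A i \<in> sets mu) \<longrightarrow>
        (\<lambda>n. measure mu (A 0 \<inter> (\<Inter>i\<in>{1..k}. (T i ^^ n) -` A i \<inter> space mu)))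
          \<longlonglongrightarrow> measure mu (A 0) * (\<Prod>i\<in>{1..k}. measure (mus i) (A i)))"

end

theory Submission imports Defs begin

text \<open>Writing \<open>E\<^sub>n\<close> for the intersection of the preimages \<open>T\<^sub>i\<^sup>-\<^sup>n A\<^sub>i\<close>, joint mixing for \<open>\<mu>\<close> says
  that \<open>\<integral> h 1\<^bsub>E\<^sub>n\<^esub> d\<mu> \<longrightarrow> c \<integral> h d\<mu>\<close>, with \<open>c = \<Prod>\<^sub>i \<mu>\<^sub>i(A\<^sub>i)\<close>, for every indicator function \<open>h\<close>.
  Since the \<open>1\<^bsub>E\<^sub>n\<^esub>\<close> are uniformly bounded and simple functions are dense in \<open>L\<^sup>1(\<mu>)\<close>, the
  same holds for every integrable \<open>h\<close>, in particular for \<open>h = 1\<^bsub>A\<^sub>0\<^esub> d\<nu>/d\<mu>\<close>, which is joint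
  mixing for \<open>\<nu>\<close>.\<close>

lemma integrable_mult_bounded:
  fixes f g :: "'a \<Rightarrow> real"
  assumes "integrable M f" "g \<in> borel_measurable M" "\<And>x. x \<in> space M \<Longrightarrow> \<bar>g x\<bar> \<le> 1"
  shows "integrable M (\<lambda>x. f x * g x)"
proof (rule Bochner_Integration.integrable_bound[OF assms(1)])
  show "(\<lambda>x. f x * g x) \<in> borel_measurable M" using assms by measurable
  show "AE x in M. norm (f x * g x) \<le> norm (f x)"
    using assms(3) by (auto simp: abs_mult intro!: mult_left_le)
qed

lemma integral_mult_bounded_diff_le:
  fixes f h g :: "'a \<Rightarrow> real"
  assumes "integrable M f" "integrable M h"
    and "g \<in> borel_measurable M" "\<And>x. x \<in> space M \<Longrightarrow> \<bar>g x\<bar> \<le> 1"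
  shows "\<bar>(\<integral>x. f x * g x \<partial>M) - (\<integral>x. h x * g x \<partial>M)\<bar> \<le> (\<integral>x. \<bar>f x - h x\<bar> \<partial>M)"
proof -
  have fh: "integrable M (\<lambda>x. f x - h x)" using assms by simp
  have "(\<integral>x. f x * g x \<partial>M) - (\<integral>x. h x * g x \<partial>M) = (\<integral>x. (f x - h x) * g x \<partial>M)"
    using integrable_mult_bounded[OF _ assms(3,4)] assms(1,2) by (simp add: left_diff_distrib)
  also have "\<bar>\<dots>\<bar> \<le> (\<integral>x. \<bar>(f x - h x) * g x\<bar> \<partial>M)"
    using integral_norm_bound[of M "\<lambda>x. (f x - h x) * g x"] by simp
  also have "\<dots> \<le> (\<integral>x. \<bar>f x - h x\<bar> \<partial>M)"
    using integrable_abs[OF integrable_mult_bounded[OF fh assms(3,4)]] fh assms(4)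
    by (intro Bochner_Integration.integral_mono) (auto simp: abs_mult intro!: mult_left_le)
  finally show ?thesis .
qed

lemma tendsto_integral_mult_L1_approx:
  fixes f :: "'a \<Rightarrow> real" and s g :: "nat \<Rightarrow> 'a \<Rightarrow> real"
  assumes g: "\<And>n. g n \<in> borel_measurable M" "\<And>n x. x \<in> space M \<Longrightarrow> \<bar>g n x\<bar> \<le> 1"
    and f: "integrable M f" and s: "\<And>i. integrable M (s i)"
    and L1: "(\<lambda>i. \<integral>x. \<bar>s i x - f x\<bar> \<partial>M) \<longlonglongrightarrow> 0"
    and conv: "\<And>i. (\<lambda>n. \<integral>x. s i x * g n x \<partial>M) \<longlonglongrightarrow> c * integral\<^sup>L M (s i)"
  shows "(\<lambda>n. \<integral>x. f x * g n x \<partial>M) \<longlonglongrightarrow> c * integral\<^sup>L M f"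
proof -
  define b where "b i = (\<integral>x. \<bar>s i x - f x\<bar> \<partial>M)" for i
  have bound: "\<bar>(\<integral>x. f x * g n x \<partial>M) - c * integral\<^sup>L M f\<bar>
      \<le> (1 + \<bar>c\<bar>) * b i + \<bar>(\<integral>x. s i x * g n x \<partial>M) - c * integral\<^sup>L M (s i)\<bar>" for i n
  proof -
    have "\<bar>(\<integral>x. f x * g n x \<partial>M) - (\<integral>x. s i x * g n x \<partial>M)\<bar> \<le> b i"
      using integral_mult_bounded_diff_le[OF f s g] by (simp add: b_def abs_minus_commute)
    moreover have "\<bar>integral\<^sup>L M (s i) - integral\<^sup>L M f\<bar> \<le> b i"
      using integral_norm_bound[of M "\<lambda>x. s i x - f x"] f s by (simp add: b_def)
    then have "\<bar>c * integral\<^sup>L M (s i) - c * integral\<^sup>L M f\<bar> \<le> \<bar>c\<bar> * b i"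
      by (simp add: abs_mult mult_left_mono flip: right_diff_distrib)
    ultimately show ?thesis by (simp add: distrib_right)
  qed
  show ?thesis
  proof (rule LIMSEQ_I)
    fix r :: real assume "0 < r"
    have "(\<lambda>i. (1 + \<bar>c\<bar>) * b i) \<longlonglongrightarrow> (1 + \<bar>c\<bar>) * 0"
      using L1 unfolding b_def by (intro tendsto_mult tendsto_const)
    then have "\<forall>\<^sub>F i in sequentially. (1 + \<bar>c\<bar>) * b i < r / 2"
      by (rule order_tendstoD(2)) (use \<open>0 < r\<close> in simp)
    then obtain i where i: "(1 + \<bar>c\<bar>) * b i < r / 2"
      using eventually_sequentially by auto
    obtain N where N: "\<And>n. n \<ge> N \<Longrightarrow>
        \<bar>(\<integral>x. s i x * g n x \<partial>M) - c * integral\<^sup>L M (s i)\<bar> < r / 2"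
      using LIMSEQ_D[OF conv[of i], of "r / 2"] \<open>0 < r\<close> by auto
    show "\<exists>N. \<forall>n\<ge>N. norm ((\<integral>x. f x * g n x \<partial>M) - c * integral\<^sup>L M f) < r"
    proof (intro exI allI impI)
      fix n assume "N \<le> n"
      then show "norm ((\<integral>x. f x * g n x \<partial>M) - c * integral\<^sup>L M f) < r"
        using bound[of n i] N[of n] i by simp
    qed
  qed
qed

lemma tendsto_integral_mult_of_indicators:
  fixes g :: "nat \<Rightarrow> 'a \<Rightarrow> real" and h :: "'a \<Rightarrow> real"
  assumes g: "\<And>n. g n \<in> borel_measurable M" "\<And>n x. x \<in> space M \<Longrightarrow> \<bar>g n x\<bar> \<le> 1"
    and conv: "\<And>B. B \<in> sets M \<Longrightarrow>
      (\<lambda>n. \<integral>x. indicator B x * g n x \<partial>M) \<longlonglongrightarrow> c * measure M B"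
    and h: "integrable M h"
  shows "(\<lambda>n. \<integral>x. h x * g n x \<partial>M) \<longlonglongrightarrow> c * integral\<^sup>L M h"
  using h
proof induct
  case (base A a)
  have "(\<integral>x. indicator A x *\<^sub>R a * g n x \<partial>M) = a * (\<integral>x. indicator A x * g n x \<partial>M)" for n
    by (simp add: mult.assoc mult.left_commute)
  moreover have "c * (\<integral>x. indicator A x *\<^sub>R a \<partial>M) = a * (c * measure M A)"
    using base sets.sets_into_space[OF base(1)] by (simp add: Int_absorb2)
  ultimately show ?case
    using base by (simp only:) (intro tendsto_mult tendsto_const conv)
next
  case (add f1 f2)
  have "(\<integral>x. (f1 x + f2 x) * g n x \<partial>M) = (\<integral>x. f1 x * g n x \<partial>M) + (\<integral>x. f2 x * g n x \<partial>M)" for n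
    using integrable_mult_bounded[OF add(1) g] integrable_mult_bounded[OF add(3) g]
    by (simp add: distrib_right)
  then show ?case
    using tendsto_add[OF add(2) add(4)] add by (simp add: distrib_left)
next
  case (lim f s)
  have "(\<lambda>i. \<integral>x. \<bar>s i x - f x\<bar> \<partial>M) \<longlonglongrightarrow> (\<integral>x. 0 \<partial>M)"
  proof (rule integral_dominated_convergence[where w="\<lambda>x. 3 * \<bar>f x\<bar>"])
    show "(\<lambda>x. \<bar>s i x - f x\<bar>) \<in> borel_measurable M" for i
      using lim by measurable
    show "AE x in M. (\<lambda>i. \<bar>s i x - f x\<bar>) \<longlonglongrightarrow> 0"
      using lim(3) by (intro AE_I2) (simp add: tendsto_rabs_zero LIM_zero)
    show "AE x in M. norm \<bar>s i x - f x\<bar> \<le> 3 * \<bar>f x\<bar>" for i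
      using lim(4) by (intro AE_I2) (smt (verit) real_norm_def)
  qed (use lim in auto)
  then have "(\<lambda>i. \<integral>x. \<bar>s i x - f x\<bar> \<partial>M) \<longlonglongrightarrow> 0"
    by simp
  from tendsto_integral_mult_L1_approx[OF g lim(5) lim(1) this lim(2)] show ?case .
qed

lemma measure_density_eq_integral:
  fixes D :: "'a \<Rightarrow> real"
  assumes "D \<in> borel_measurable M" "\<And>x. 0 \<le> D x" "B \<in> sets M"
  shows "measure (density M D) B = (\<integral>x. D x * indicator B x \<partial>M)"
proof -
  have "measure (density M D) B = integral\<^sup>L (density M D) (indicator B)"
    using sets.sets_into_space[OF assms(3)] by (simp add: Int_absorb2)
  also have "\<dots> = (\<integral>x. D x * indicator B x \<partial>M)"
    using assms by (subst integral_density) auto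
  finally show ?thesis .
qed

lemma tendsto_measure_density_Int:
  fixes D :: "'a \<Rightarrow> real" and E :: "nat \<Rightarrow> 'a set"
  assumes D: "D \<in> borel_measurable M" "\<And>x. 0 \<le> D x" "integrable M D"
    and E: "\<And>n. E n \<in> sets M"
    and mixing: "\<And>B. B \<in> sets M \<Longrightarrow> (\<lambda>n. measure M (B \<inter> E n)) \<longlonglongrightarrow> c * measure M B"
    and A: "A \<in> sets M"
  shows "(\<lambda>n. measure (density M D) (A \<inter> E n)) \<longlonglongrightarrow> c * measure (density M D) A"
proof -
  have "(\<lambda>n. \<integral>x. (D x * indicator A x) * indicator (E n) x \<partial>M)
      \<longlonglongrightarrow> c * (\<integral>x. D x * indicator A x \<partial>M)"
  proof (rule tendsto_integral_mult_of_indicators)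
    show "(\<lambda>n. \<integral>x. indicator B x * indicator (E n) x \<partial>M) \<longlonglongrightarrow> c * measure M B"
      if "B \<in> sets M" for B
      using mixing[OF that] that E by (simp add: indicator_inter_arith[symmetric])
    show "indicator (E n) \<in> borel_measurable M" for n
      using E by simp
    show "\<bar>indicator (E n) x\<bar> \<le> (1::real)" for n x
      by (simp split: split_indicator)
    show "integrable M (\<lambda>x. D x * indicator A x)"
      using A D by (simp add: integrable_real_mult_indicator)
  qed
  moreover have "measure (density M D) (A \<inter> E n) = (\<integral>x. (D x * indicator A x) * indicator (E n) x \<partial>M)" for n
    using A E D by (simp add: measure_density_eq_integral indicator_inter_arith mult.assoc)
  ultimately show ?thesis
    using A D by (simp add: measure_density_eq_integral)
qed

lemma equivalent_measures_imp_absolutely_continuous: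
  "equivalent_measures N M \<Longrightarrow> absolutely_continuous M N"
  unfolding equivalent_measures_def absolutely_continuous_def null_sets_def by auto

lemma (in sigma_finite_measure) integrable_real_RN_deriv:
  assumes "finite_measure N" "absolutely_continuous M N" "sets N = sets M"
  obtains D where "D \<in> borel_measurable M" "\<And>x. 0 \<le> D x" "integrable M D"
    "N = density M D"
proof -
  obtain D where D: "D \<in> borel_measurable M" "\<And>x. 0 \<le> D x"
    and RN: "AE x in M. RN_deriv M N x = ennreal (D x)"
    using real_RN_deriv[OF assms] by metis
  have N: "N = density M D"
    using density_RN_deriv[OF assms(2,3)] density_cong[OF _ _ RN] D by simp
  have "integrable N (\<lambda>_. 1::real)"
    using assms(1) by (simp add: finite_measure.integrable_const)
  then have "integrable M D"
    using D by (simp add: N integrable_density)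
  with D N that show ?thesis by blast
qed

definition joint_preimage ::
  "'a measure \<Rightarrow> (nat \<Rightarrow> 'a \<Rightarrow> 'a) \<Rightarrow> (nat \<Rightarrow> 'a set) \<Rightarrow> nat \<Rightarrow> nat \<Rightarrow> 'a set" where
  "joint_preimage M T A k n = space M \<inter> (\<Inter>i\<in>{1..k}. (T i ^^ n) -` A i \<inter> space M)"

lemma joint_preimage_in_sets:
  assumes "\<And>i. i \<in> {1..k} \<Longrightarrow> T i \<in> M \<rightarrow>\<^sub>M M" "\<And>i. i \<in> {1..k} \<Longrightarrow> A i \<in> sets M"
  shows "joint_preimage M T A k n \<in> sets M"
proof (cases "k = 0")
  case False
  then have "(\<Inter>i\<in>{1..k}. (T i ^^ n) -` A i \<inter> space M) \<in> sets M"
    using assms by (intro sets.finite_INT) (auto intro!: measurable_sets)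
  then show ?thesis by (simp add: joint_preimage_def)
qed (simp add: joint_preimage_def)

lemma jointly_mixing_iff_joint_preimage:
  "jointly_mixing M T mus k \<longleftrightarrow>
    (\<forall>A. (\<forall>i\<in>{0..k}. A i \<in> sets M) \<longrightarrow>
      (\<lambda>n. measure M (A 0 \<inter> joint_preimage M T A k n))
        \<longlonglongrightarrow> measure M (A 0) * (\<Prod>i\<in>{1..k}. measure (mus i) (A i)))"
proof -
  have "(\<lambda>n. measure M (A 0 \<inter> joint_preimage M T A k n))
      = (\<lambda>n. measure M (A 0 \<inter> (\<Inter>i\<in>{1..k}. (T i ^^ n) -` A i \<inter> space M)))"
    if "\<forall>i\<in>{0..k}. A i \<in> sets M" for A :: "nat \<Rightarrow> 'a set"
    using that sets.sets_into_space[of "A 0" M] unfolding joint_preimage_def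
    by (intro ext arg_cong[where f="measure M"]) auto
  then show ?thesis
    unfolding jointly_mixing_def by (intro all_cong1 imp_cong refl) simp
qed

lemma jointly_mixing_tendsto_measure_Int:
  assumes "jointly_mixing M T mus k" "\<And>i. i \<in> {1..k} \<Longrightarrow> A i \<in> sets M" "B \<in> sets M"
  shows "(\<lambda>n. measure M (B \<inter> joint_preimage M T A k n))
    \<longlonglongrightarrow> (\<Prod>i\<in>{1..k}. measure (mus i) (A i)) * measure M B"
proof -
  have "\<forall>i\<in>{0..k}. (A(0 := B)) i \<in> sets M"
    using assms(2,3) by auto
  then have "(\<lambda>n. measure M ((A(0 := B)) 0 \<inter> joint_preimage M T (A(0 := B)) k n))
      \<longlonglongrightarrow> measure M ((A(0 := B)) 0) * (\<Prod>i\<in>{1..k}. measure (mus i) ((A(0 := B)) i))"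
    using assms(1) unfolding jointly_mixing_iff_joint_preimage by blast
  moreover have "joint_preimage M T (A(0 := B)) k = joint_preimage M T A k"
    "(\<Prod>i\<in>{1..k}. measure (mus i) ((A(0 := B)) i)) = (\<Prod>i\<in>{1..k}. measure (mus i) (A i))"
    by (auto simp: joint_preimage_def fun_eq_iff intro!: prod.cong)
  ultimately show ?thesis
    by (simp only: fun_upd_same mult.commute[of "measure M B"])
qed

theorem lemma6p2:
  fixes mu nu :: "'a measure" and T :: "nat \<Rightarrow> 'a \<Rightarrow> 'a"
    and mus :: "nat \<Rightarrow> 'a measure" and k :: nat
  assumes "prob_space mu"
    and "\<And>i. i \<in> {1..k} \<Longrightarrow> T i \<in> mu \<rightarrow>\<^sub>M mu"
    and "\<And>i. i \<in> {1..k} \<Longrightarrow> prob_space (mus i)"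
    and "\<And>i. i \<in> {1..k} \<Longrightarrow> distr (mus i) (mus i) (T i) = mus i"
    and "\<And>i. i \<in> {1..k} \<Longrightarrow> equivalent_measures (mus i) mu"
    and "prob_space nu"
    and "equivalent_measures nu mu"
    and "jointly_mixing mu T mus k"
  shows "jointly_mixing nu T mus k"
proof -
  interpret mu: prob_space mu by fact
  interpret nu: prob_space nu by fact
  have sets_eq: "sets nu = sets mu"
    using assms(7) by (simp add: equivalent_measures_def)
  obtain D where D: "D \<in> borel_measurable mu" "\<And>x. 0 \<le> D x" "integrable mu D"
    and nu: "nu = density mu D"
    using mu.integrable_real_RN_deriv[OF nu.finite_measure_axioms
        equivalent_measures_imp_absolutely_continuous[OF assms(7)] sets_eq] by blast
  show ?thesis
    unfolding jointly_mixing_iff_joint_preimage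
  proof (intro allI impI)
    fix A :: "nat \<Rightarrow> 'a set"
    assume "\<forall>i\<in>{0..k}. A i \<in> sets nu"
    then have A: "\<And>i. i \<in> {0..k} \<Longrightarrow> A i \<in> sets mu"
      using sets_eq by auto
    have "joint_preimage nu T A k = joint_preimage mu T A k"
      using sets_eq_imp_space_eq[OF sets_eq] by (simp add: joint_preimage_def fun_eq_iff)
    moreover have "(\<lambda>n. measure (density mu D) (A 0 \<inter> joint_preimage mu T A k n))
        \<longlonglongrightarrow> (\<Prod>i\<in>{1..k}. measure (mus i) (A i)) * measure (density mu D) (A 0)"
    proof (rule tendsto_measure_density_Int[OF D])
      show "joint_preimage mu T A k n \<in> sets mu" for n
        using A assms(2) by (intro joint_preimage_in_sets) auto
      show "(\<lambda>n. measure mu (B \<inter> joint_preimage mu T A k n))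
          \<longlonglongrightarrow> (\<Prod>i\<in>{1..k}. measure (mus i) (A i)) * measure mu B" if "B \<in> sets mu" for B
        using A that by (intro jointly_mixing_tendsto_measure_Int[OF assms(8)]) auto
    qed (use A in simp)
    ultimately show "(\<lambda>n. measure nu (A 0 \<inter> joint_preimage nu T A k n))
        \<longlonglongrightarrow> measure nu (A 0) * (\<Prod>i\<in>{1..k}. measure (mus i) (A i))"
      by (simp only: nu mult.commute)
  qed
qed

end
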